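(* Let $\Bbbk$ be a commutative ring of global dimension zero, $C$ a $\Bbbk$-coalgebra with comultiplication $\Delta$, and $M$ a right $C$-comodule that is finitely generated as a $\Bbbk$-module, with coaction $\rho\colon M\to M\otimes C$. The $\Bbbk$-linear map $\mathrm{tr}^C\colon\mathrm{End}_C(M)\to C$, $\mathrm{tr}^C(f)=\mathrm{tr}(\rho\circ f)$, is a cotrace, i.e. $\Delta(\mathrm{tr}^C(f))=\tau(\Delta(\mathrm{tr}^C(f)))$ for all $f\in\mathrm{End}_C(M)$. In particular $\mathrm{tr}^C$ factors uniquely through the inclusion $\mathrm{coHH}_0(C)\hookrightarrow C$.
   Context: $\tau$ is the swap $C\otimes C\to C\otimes C$. $\mathrm{End}_C(M)$ is the $\Bbbk$-module of right $C$-colinear endomorphisms. $\mathrm{coHH}_0(C)=\ker(\Delta-\tau\circ\Delta)$. For a $\Bbbk$-linear $g\colon M\to M\otimes C$, its twisted trace is $\mathrm{tr}(g)=\sum_i (e_i^*\otimes\mathrm{id}_C)(g(e_i))\in C$ for a $\Bbbk$-basis $(e_i)$ of $M$ with dual basis $(e_i^* )$; thus $\mathrm{tr}^C(f)=\sum_i\sum e_i^*(f(e_{i(0)}))e_{i(1)}$ in Sweedler notation $\rho(m)=\sum m_{(0)}\otimes m_{(1)}$. *)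

theory Defs
  imports Main "HOL.Modules" "HOL-Library.Function_Algebras"
begin

text \<open>A commutative ring has global dimension zero iff it is semisimple, i.e. every
  ideal is a direct summand of the ring.  Ideals are the submodules of the ring
  regarded as a module over itself.\<close>

definition gldim_zero :: "'k::comm_ring_1 itself \<Rightarrow> bool" where
  "gldim_zero _ \<longleftrightarrow>
     (\<forall>I::'k set. module.subspace (*) I \<longrightarrow>
        (\<exists>J. module.subspace (*) J \<and> I \<inter> J = {0} \<and> (\<forall>x. \<exists>a\<in>I. \<exists>b\<in>J. x = a + b)))"

section \<open>Tensor products (as the quotient of the free module by the bilinearity relations)\<close>

definition free_scale :: "'k::comm_ring_1 \<Rightarrow> ('a \<Rightarrow> 'k) \<Rightarrow> ('a \<Rightarrow> 'k)" where
  "free_scale c \<phi> = (\<lambda>x. c * \<phi> x)"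

definition fdelta :: "'a \<Rightarrow> 'a \<Rightarrow> 'k::comm_ring_1" where
  "fdelta p = (\<lambda>x. if x = p then 1 else 0)"

definition bil_rel ::
  "('k::comm_ring_1 \<Rightarrow> 'm::ab_group_add \<Rightarrow> 'm) \<Rightarrow> ('k \<Rightarrow> 'n::ab_group_add \<Rightarrow> 'n)
   \<Rightarrow> ('m \<times> 'n \<Rightarrow> 'k) set" where
  "bil_rel sM sN =
     {fdelta (m + m', n) - fdelta (m, n) - fdelta (m', n) | m m' n. True}
   \<union> {fdelta (m, n + n') - fdelta (m, n) - fdelta (m, n') | m n n'. True}
   \<union> {fdelta (sM c m, n) - free_scale c (fdelta (m, n)) | c m n. True}
   \<union> {fdelta (m, sN c n) - free_scale c (fdelta (m, n)) | c m n. True}"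

definition free_lift ::
  "('k::comm_ring_1 \<Rightarrow> 't::ab_group_add \<Rightarrow> 't) \<Rightarrow> ('m \<Rightarrow> 'n \<Rightarrow> 't) \<Rightarrow> ('m \<times> 'n \<Rightarrow> 'k) \<Rightarrow> 't" where
  "free_lift sT t \<phi> = (\<Sum>p\<in>{p. \<phi> p \<noteq> 0}. sT (\<phi> p) (t (fst p) (snd p)))"

text \<open>is_tensor sM sN sT t: the module T (scalar action sT) together with the
  bilinear map t is a tensor product of M and N, i.e. the induced map from the free
  module on M x N onto T is surjective with kernel the span of the bilinearity relations.\<close>

definition is_tensor ::
  "('k::comm_ring_1 \<Rightarrow> 'm::ab_group_add \<Rightarrow> 'm) \<Rightarrow> ('k \<Rightarrow> 'n::ab_group_add \<Rightarrow> 'n)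
   \<Rightarrow> ('k \<Rightarrow> 't::ab_group_add \<Rightarrow> 't) \<Rightarrow> ('m \<Rightarrow> 'n \<Rightarrow> 't) \<Rightarrow> bool" where
  "is_tensor sM sN sT t \<longleftrightarrow>
     module sM \<and> module sN \<and> module sT \<and>
     (\<forall>n. module_hom sM sT (\<lambda>m. t m n)) \<and> (\<forall>m. module_hom sN sT (t m)) \<and>
     (\<forall>x. \<exists>\<phi>. finite {p. \<phi> p \<noteq> 0} \<and> x = free_lift sT t \<phi>) \<and>
     (\<forall>\<phi>. finite {p. \<phi> p \<noteq> 0} \<and> free_lift sT t \<phi> = 0 \<longrightarrow>
           \<phi> \<in> module.span free_scale (bil_rel sM sN))"

definition tlift ::
  "('k::comm_ring_1 \<Rightarrow> 't::ab_group_add \<Rightarrow> 't) \<Rightarrow> ('m \<Rightarrow> 'n \<Rightarrow> 't)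
   \<Rightarrow> ('k \<Rightarrow> 'u::ab_group_add \<Rightarrow> 'u) \<Rightarrow> ('m \<Rightarrow> 'n \<Rightarrow> 'u) \<Rightarrow> 't \<Rightarrow> 'u" where
  "tlift sT t sU b = (THE h. module_hom sT sU h \<and> (\<forall>x y. h (t x y) = b x y))"

definition tassoc where
  "tassoc sAB_C tAB_C sAB tAB sA_BC tA_BC tBC =
     tlift sAB_C tAB_C sA_BC (\<lambda>u z. tlift sAB tAB sA_BC (\<lambda>x y. tA_BC x (tBC y z)) u)"

text \<open>Parameters: C (scalar action sC); C\<otimes>C (sCC, tCC); (C\<otimes>C)\<otimes>C (sCC_C, tCC_C);
  C\<otimes>(C\<otimes>C) (sC_CC, tC_CC); comultiplication \<Delta>, counit \<epsilon>.\<close>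

definition coalgebra where
  "coalgebra sC sCC tCC sCC_C tCC_C sC_CC tC_CC \<Delta> \<epsilon> \<longleftrightarrow>
     is_tensor sC sC sCC tCC \<and> is_tensor sCC sC sCC_C tCC_C \<and> is_tensor sC sCC sC_CC tC_CC \<and>
     module_hom sC sCC \<Delta> \<and> module_hom sC (*) \<epsilon> \<and>
     (\<forall>c. tassoc sCC_C tCC_C sCC tCC sC_CC tC_CC tCC
            (tlift sCC tCC sCC_C (\<lambda>x y. tCC_C (\<Delta> x) y) (\<Delta> c))
          = tlift sCC tCC sC_CC (\<lambda>x y. tC_CC x (\<Delta> y)) (\<Delta> c)) \<and>
     (\<forall>c. tlift sCC tCC sC (\<lambda>x y. sC (\<epsilon> x) y) (\<Delta> c) = c) \<and>
     (\<forall>c. tlift sCC tCC sC (\<lambda>x y. sC (\<epsilon> y) x) (\<Delta> c) = c)"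

text \<open>Right comodule M (sM) with M\<otimes>C (sMC, tMC), (M\<otimes>C)\<otimes>C (sMC_C, tMC_C),
  M\<otimes>(C\<otimes>C) (sM_CC, tM_CC), coaction \<rho>.\<close>

definition right_comodule where
  "right_comodule sC sCC tCC \<Delta> \<epsilon> sM sMC tMC sMC_C tMC_C sM_CC tM_CC \<rho> \<longleftrightarrow>
     is_tensor sM sC sMC tMC \<and> is_tensor sMC sC sMC_C tMC_C \<and> is_tensor sM sCC sM_CC tM_CC \<and>
     module_hom sM sMC \<rho> \<and>
     (\<forall>m. tassoc sMC_C tMC_C sMC tMC sM_CC tM_CC tCC
            (tlift sMC tMC sMC_C (\<lambda>x y. tMC_C (\<rho> x) y) (\<rho> m))
          = tlift sMC tMC sM_CC (\<lambda>x y. tM_CC x (\<Delta> y)) (\<rho> m)) \<and>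
     (\<forall>m. tlift sMC tMC sM (\<lambda>x y. sM (\<epsilon> y) x) (\<rho> m) = m)"

definition colinear where
  "colinear sM sMC tMC \<rho> f \<longleftrightarrow>
     module_hom sM sM f \<and> (\<forall>m. \<rho> (f m) = tlift sMC tMC sMC (\<lambda>x c. tMC (f x) c) (\<rho> m))"

definition finitely_generated where
  "finitely_generated sM \<longleftrightarrow> (\<exists>S. finite S \<and> module.span sM S = UNIV)"

definition dual_basis ::
  "('k::comm_ring_1 \<Rightarrow> 'm::ab_group_add \<Rightarrow> 'm) \<Rightarrow> nat \<Rightarrow> (nat \<Rightarrow> 'm) \<Rightarrow> (nat \<Rightarrow> 'm \<Rightarrow> 'k) \<Rightarrow> bool" where
  "dual_basis sM n e \<phi> \<longleftrightarrow>
     (\<forall>i<n. module_hom sM (*) (\<phi> i)) \<and> (\<forall>m. m = (\<Sum>i<n. sM (\<phi> i m) (e i)))"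

definition twisted_trace where
  "twisted_trace sM sMC tMC sC g =
     (SOME x. \<exists>n e \<phi>. dual_basis sM n e \<phi> \<and>
        x = (\<Sum>i<n. tlift sMC tMC sC (\<lambda>m c. sC (\<phi> i m) c) (g (e i))))"

definition trC where
  "trC sM sMC tMC sC \<rho> f = twisted_trace sM sMC tMC sC (\<lambda>m. \<rho> (f m))"

definition tswap where
  "tswap sCC tCC = tlift sCC tCC sCC (\<lambda>x y. tCC y x)"

definition coHH0 where
  "coHH0 sCC tCC \<Delta> = {c. \<Delta> c - tswap sCC tCC (\<Delta> c) = 0}"

end

theory Submission
  imports Defs
begin

text \<open>
  Over a ring of global dimension zero every ideal is generated by an idempotent.  This makes
  the coordinate along a new generator well defined, so a dual basis of a finitely generated
  module can be built one generator at a time.  Hence M has a finite dual basis (e_i, e_i^* ),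
  and the twisted trace may be computed in it.

  Write \<rho>(e_j) = \<Sum>_i e_i \<otimes> d_ij.  Coassociativity of \<rho> gives
  \<Delta>(d_lk) = \<Sum>_j d_lj \<otimes> d_jk, and colinearity of f says that the matrix
  F = (e_i^*(f e_j)) commutes with D = (d_ij).  Since tr^C(f) = \<Sum>_ik F_ki d_ik,
  \<Delta>(tr^C f) = \<Sum>_kj (FD)_kj \<otimes> d_jk = \<Sum>_kj (DF)_kj \<otimes> d_jk
  = \<Sum>_ki d_ki \<otimes> (FD)_ik, which is the swap of the first sum.
\<close>

definition module_bilinear ::
  "('k::comm_ring_1 \<Rightarrow> 'a::ab_group_add \<Rightarrow> 'a) \<Rightarrow> ('k \<Rightarrow> 'b::ab_group_add \<Rightarrow> 'b)
   \<Rightarrow> ('k \<Rightarrow> 'u::ab_group_add \<Rightarrow> 'u) \<Rightarrow> ('a \<Rightarrow> 'b \<Rightarrow> 'u) \<Rightarrow> bool" where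
  "module_bilinear sA sB sU b \<longleftrightarrow>
     (\<forall>y. module_hom sA sU (\<lambda>x. b x y)) \<and> (\<forall>x. module_hom sB sU (b x))"

lemma module_bilinear_hom_left: "module_bilinear sA sB sU b \<Longrightarrow> module_hom sA sU (\<lambda>x. b x y)"
  and module_bilinear_hom_right: "module_bilinear sA sB sU b \<Longrightarrow> module_hom sB sU (b x)"
  unfolding module_bilinear_def by blast+

lemma module_bilinear_compose_left:
  "module_bilinear sA sB sU b \<Longrightarrow> module_hom sX sA f \<Longrightarrow> module_bilinear sX sB sU (\<lambda>x y. b (f x) y)"
  unfolding module_bilinear_def using module_hom_compose by (fastforce simp: o_def)

lemma module_bilinear_compose_right:
  "module_bilinear sA sB sU b \<Longrightarrow> module_hom sY sB g \<Longrightarrow> module_bilinear sA sY sU (\<lambda>x y. b x (g y))"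
  unfolding module_bilinear_def using module_hom_compose by (fastforce simp: o_def)

lemma module_bilinear_flip:
  "module_bilinear sA sB sU b \<Longrightarrow> module_bilinear sB sA sU (\<lambda>y x. b x y)"
  unfolding module_bilinear_def by blast

lemma module_bilinear_scale_functional:
  assumes "module_hom sM (*) \<phi>" and "module sC"
  shows "module_bilinear sM sC sC (\<lambda>m c. sC (\<phi> m) c)"
  using module_pair.module_hom_compose_scale[OF module_pair.intro] module.module_hom_scale_self
    assms module_hom_iff
  unfolding module_bilinear_def by metis

abbreviation finsupp :: "('a \<Rightarrow> 'k::zero) \<Rightarrow> bool" where
  "finsupp \<phi> \<equiv> finite {p. \<phi> p \<noteq> 0}"

lemma module_free_scale: "module (free_scale :: 'k::comm_ring_1 \<Rightarrow> ('a \<Rightarrow> 'k) \<Rightarrow> _)"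
  by unfold_locales (auto simp: free_scale_def fun_eq_iff algebra_simps)

lemma finsupp_add: "finsupp \<phi> \<Longrightarrow> finsupp \<psi> \<Longrightarrow> finsupp (\<phi> + \<psi>)"
  and finsupp_diff: "finsupp \<phi> \<Longrightarrow> finsupp \<psi> \<Longrightarrow> finsupp (\<phi> - \<psi>)"
  for \<phi> \<psi> :: "'a \<Rightarrow> 'k::ab_group_add"
  by (auto intro: finite_subset[of _ "{p. \<phi> p \<noteq> 0} \<union> {p. \<psi> p \<noteq> 0}"])

lemma finsupp_free_scale: "finsupp \<phi> \<Longrightarrow> finsupp (free_scale c \<phi>)"
  by (auto simp: free_scale_def elim!: finite_subset[rotated])

lemma finsupp_fdelta: "finsupp (fdelta q :: _ \<Rightarrow> 'k::comm_ring_1)"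
  by (auto simp: fdelta_def intro: finite_subset[of _ "{q}"])

context
  fixes sU :: "'k::comm_ring_1 \<Rightarrow> 'u::ab_group_add \<Rightarrow> 'u"
  assumes U: "module sU"
begin

lemma free_lift_eq_sum:
  "finite F \<Longrightarrow> {p. \<phi> p \<noteq> 0} \<subseteq> F \<Longrightarrow> free_lift sU b \<phi> = (\<Sum>p\<in>F. sU (\<phi> p) (b (fst p) (snd p)))"
  unfolding free_lift_def
  by (rule sum.mono_neutral_left) (auto simp: module.scale_zero_left[OF U] intro: finite_subset)

lemma free_lift_add: "free_lift sU b (\<phi> + \<psi>) = free_lift sU b \<phi> + free_lift sU b \<psi>"
  and free_lift_diff: "free_lift sU b (\<phi> - \<psi>) = free_lift sU b \<phi> - free_lift sU b \<psi>"
  if "finsupp \<phi>" "finsupp \<psi>"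
proof -
  let ?F = "{p. \<phi> p \<noteq> 0} \<union> {p. \<psi> p \<noteq> 0}"
  have "free_lift sU b \<chi> = (\<Sum>p\<in>?F. sU (\<chi> p) (b (fst p) (snd p)))"
    if "\<chi> \<in> {\<phi>, \<psi>, \<phi> + \<psi>, \<phi> - \<psi>}" for \<chi>
    by (rule free_lift_eq_sum) (use that \<open>finsupp \<phi>\<close> \<open>finsupp \<psi>\<close> in auto)
  then show "free_lift sU b (\<phi> + \<psi>) = free_lift sU b \<phi> + free_lift sU b \<psi>"
    and "free_lift sU b (\<phi> - \<psi>) = free_lift sU b \<phi> - free_lift sU b \<psi>"
    by (simp_all add: sum.distrib sum_subtractf module.scale_left_distrib[OF U]
        module.scale_left_diff_distrib[OF U])
qed

lemma free_lift_free_scale: "free_lift sU b (free_scale c \<phi>) = sU c (free_lift sU b \<phi>)"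
  if "finsupp \<phi>"
proof -
  have "free_lift sU b (free_scale c \<phi>) = (\<Sum>p | \<phi> p \<noteq> 0. sU (free_scale c \<phi> p) (b (fst p) (snd p)))"
    by (rule free_lift_eq_sum) (auto simp: free_scale_def that)
  then show ?thesis
    by (simp add: free_lift_def free_scale_def module.scale_sum_right[OF U] module.scale_scale[OF U])
qed

lemma free_lift_fdelta: "free_lift sU b (fdelta q) = b (fst q) (snd q)"
  using free_lift_eq_sum[of "{q}" "fdelta q"] by (auto simp: fdelta_def module.scale_one[OF U])

lemma free_lift_fdelta_diff_diff:
  "free_lift sU b (fdelta p - fdelta q - fdelta r) =
     b (fst p) (snd p) - b (fst q) (snd q) - b (fst r) (snd r)"
  by (simp only: free_lift_diff finsupp_diff finsupp_fdelta free_lift_fdelta)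

lemma free_lift_fdelta_diff_scale:
  "free_lift sU b (fdelta p - free_scale c (fdelta q)) = b (fst p) (snd p) - sU c (b (fst q) (snd q))"
  by (simp only: free_lift_diff finsupp_free_scale finsupp_fdelta free_lift_free_scale free_lift_fdelta)

lemma free_lift_bil_rel:
  assumes b: "module_bilinear sA sB sU b" and "\<phi> \<in> module.span free_scale (bil_rel sA sB)"
  shows "free_lift sU b \<phi> = 0"
proof -
  let ?Z = "{\<phi>. finsupp \<phi> \<and> free_lift sU b \<phi> = 0}"
  have "module.subspace free_scale ?Z"
    unfolding module.subspace_def[OF module_free_scale]
    by (intro conjI ballI allI)
       (auto simp: free_lift_def[of _ _ 0] finsupp_add finsupp_free_scale free_lift_add
         free_lift_free_scale module.scale_zero_right[OF U] simp del: plus_fun_apply)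
  moreover have "bil_rel sA sB \<subseteq> ?Z"
    using b unfolding bil_rel_def
    by (auto simp: free_lift_fdelta_diff_diff free_lift_fdelta_diff_scale
        module_hom.add[OF module_bilinear_hom_left] module_hom.add[OF module_bilinear_hom_right]
        module_hom.scale[OF module_bilinear_hom_left] module_hom.scale[OF module_bilinear_hom_right]
        simp del: minus_apply intro!: finsupp_diff finsupp_fdelta finsupp_free_scale)
  ultimately show ?thesis
    using assms(2) module.span_minimal[OF module_free_scale] by blast
qed

end

lemma hom_free_lift: "module_hom sT sU h \<Longrightarrow> h (free_lift sT t \<phi>) = free_lift sU (\<lambda>x y. h (t x y)) \<phi>"
  unfolding free_lift_def by (simp add: module_hom.sum module_hom.scale)

section \<open>Universal property of the tensor product\<close>

lemma is_tensor_module_left: "is_tensor sA sB sT t \<Longrightarrow> module sA"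
  and is_tensor_module_right: "is_tensor sA sB sT t \<Longrightarrow> module sB"
  and is_tensor_module: "is_tensor sA sB sT t \<Longrightarrow> module sT"
  and is_tensor_bilinear: "is_tensor sA sB sT t \<Longrightarrow> module_bilinear sA sB sT t"
  unfolding is_tensor_def module_bilinear_def by blast+

lemma tensor_hom_eqI:
  assumes T: "is_tensor sA sB sT t" and "module_hom sT sU h1" "module_hom sT sU h2"
    and "\<And>x y. h1 (t x y) = h2 (t x y)"
  shows "h1 = h2"
proof
  fix z
  obtain \<phi> where "z = free_lift sT t \<phi>"
    using T unfolding is_tensor_def by blast
  then show "h1 z = h2 z"
    using assms by (simp add: hom_free_lift)
qed

lemma tensor_lift_exists:
  assumes T: "is_tensor sA sB sT t" and U: "module sU" and b: "module_bilinear sA sB sU b"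
  shows "\<exists>h. module_hom sT sU h \<and> (\<forall>x y. h (t x y) = b x y)"
proof -
  have T': "module sT" using is_tensor_module[OF T] .
  have onto: "\<And>x. \<exists>\<phi>. finsupp \<phi> \<and> x = free_lift sT t \<phi>"
    and ker: "\<And>\<phi>. finsupp \<phi> \<Longrightarrow> free_lift sT t \<phi> = 0 \<Longrightarrow> \<phi> \<in> module.span free_scale (bil_rel sA sB)"
    using T unfolding is_tensor_def by blast+
  define H where "H x = free_lift sU b (SOME \<phi>. finsupp \<phi> \<and> x = free_lift sT t \<phi>)" for x
  have H: "H (free_lift sT t \<phi>) = free_lift sU b \<phi>" if \<phi>: "finsupp \<phi>" for \<phi>
  proof -
    obtain \<psi> where \<psi>: "finsupp \<psi>" "free_lift sT t \<phi> = free_lift sT t \<psi>"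
      and H_eq: "H (free_lift sT t \<phi>) = free_lift sU b \<psi>"
      using someI_ex[of "\<lambda>\<psi>. finsupp \<psi> \<and> free_lift sT t \<phi> = free_lift sT t \<psi>"] \<phi>
      unfolding H_def by blast
    have "\<psi> - \<phi> \<in> module.span free_scale (bil_rel sA sB)"
      using \<psi> \<phi> by (intro ker finsupp_diff) (simp_all add: free_lift_diff[OF T'])
    then have "free_lift sU b (\<psi> - \<phi>) = 0"
      by (rule free_lift_bil_rel[OF U b])
    then show ?thesis
      using \<psi>(1) \<phi> by (simp add: H_eq free_lift_diff[OF U])
  qed
  have "module_hom sT sU H"
    unfolding module_hom_iff
  proof (intro conjI allI T' U)
    fix x y c
    obtain \<phi> \<psi> where \<phi>: "finsupp \<phi>" and x: "x = free_lift sT t \<phi>"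
      and \<psi>: "finsupp \<psi>" and y: "y = free_lift sT t \<psi>"
      using onto by meson
    show "H (x + y) = H x + H y"
      using H[OF finsupp_add[OF \<phi> \<psi>]]
      by (simp only: x y H \<phi> \<psi> free_lift_add[OF T' \<phi> \<psi>] free_lift_add[OF U \<phi> \<psi>])
    show "H (sT c x) = sU c (H x)"
      using H[OF finsupp_free_scale[OF \<phi>]]
      by (simp only: x H \<phi> free_lift_free_scale[OF T' \<phi>] free_lift_free_scale[OF U \<phi>])
  qed
  moreover have "H (t x y) = b x y" for x y
    using H[OF finsupp_fdelta, of "(x, y)"] by (simp add: free_lift_fdelta[OF T'] free_lift_fdelta[OF U])
  ultimately show ?thesis by blast
qed

lemma tlift_unique:
  assumes T: "is_tensor sA sB sT t" and h: "module_hom sT sU h" and hb: "\<And>x y. h (t x y) = b x y"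
  shows "tlift sT t sU b = h"
  unfolding tlift_def
proof (rule the_equality)
  fix h' assume "module_hom sT sU h' \<and> (\<forall>x y. h' (t x y) = b x y)"
  then show "h' = h"
    using tensor_hom_eqI[OF T _ h, of h'] hb by simp
qed (use h hb in blast)

context
  fixes sA :: "'k::comm_ring_1 \<Rightarrow> 'a::ab_group_add \<Rightarrow> 'a" and sB :: "'k \<Rightarrow> 'b::ab_group_add \<Rightarrow> 'b"
    and sT :: "'k \<Rightarrow> 't::ab_group_add \<Rightarrow> 't" and sU :: "'k \<Rightarrow> 'u::ab_group_add \<Rightarrow> 'u"
    and t :: "'a \<Rightarrow> 'b \<Rightarrow> 't" and b :: "'a \<Rightarrow> 'b \<Rightarrow> 'u"
  assumes T: "is_tensor sA sB sT t" and U: "module sU" and b: "module_bilinear sA sB sU b"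
begin

lemma tlift_hom: "module_hom sT sU (tlift sT t sU b)"
  and tlift_tensor: "tlift sT t sU b (t x y) = b x y"
  using tensor_lift_exists[OF T U b] tlift_unique[OF T] by metis+

end

lemma tassoc_hom: "module_hom sAB_C sA_BC (tassoc sAB_C tAB_C sAB tAB sA_BC tA_BC tBC)"
  and tassoc_tensor: "tassoc sAB_C tAB_C sAB tAB sA_BC tA_BC tBC (tAB_C (tAB x y) z) = tA_BC x (tBC y z)"
  if AB: "is_tensor sA sB sAB tAB" and AB_C: "is_tensor sAB sC sAB_C tAB_C"
    and A_BC: "is_tensor sA sBC sA_BC tA_BC" and BC: "module_bilinear sB sC sBC tBC"
proof -
  note A_BC_mod = is_tensor_module[OF A_BC] and A_BC_bil = is_tensor_bilinear[OF A_BC]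
  define g where "g z = tlift sAB tAB sA_BC (\<lambda>x y. tA_BC x (tBC y z))" for z
  have "module_bilinear sA sB sA_BC (\<lambda>x y. tA_BC x (tBC y z))" for z
    using module_bilinear_compose_right[OF A_BC_bil module_bilinear_hom_left[OF BC]] .
  then have g_hom: "module_hom sAB sA_BC (g z)" and g_tensor: "g z (tAB x y) = tA_BC x (tBC y z)"
    for z x y
    unfolding g_def by (rule tlift_hom[OF AB A_BC_mod] tlift_tensor[OF AB A_BC_mod])+
  have "module_hom sC sA_BC (\<lambda>z. g z u)" for u
  proof -
    have pair: "module_pair sAB sA_BC"
      using is_tensor_module[OF AB] A_BC_mod by (rule module_pair.intro)
    have "g (z + z') = (\<lambda>u. g z u + g z' u)" "g (sC c z) = (\<lambda>u. sA_BC c (g z u))" for z z' c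
      unfolding g_def[of "z + z'"] g_def[of "sC c z"]
      by (intro tlift_unique[OF AB] module_pair.module_hom_add[OF pair]
            module_pair.module_hom_scale[OF pair] g_hom;
          simp add: g_tensor module_hom.add[OF module_bilinear_hom_right[OF BC]]
          module_hom.scale[OF module_bilinear_hom_right[OF BC]]
          module_hom.add[OF module_bilinear_hom_right[OF A_BC_bil]]
          module_hom.scale[OF module_bilinear_hom_right[OF A_BC_bil]])+
    then show ?thesis
      unfolding module_hom_iff using is_tensor_module_right[OF AB_C] A_BC_mod by simp
  qed
  then have bil: "module_bilinear sAB sC sA_BC (\<lambda>u z. g z u)"
    unfolding module_bilinear_def using g_hom by simp
  have "tassoc sAB_C tAB_C sAB tAB sA_BC tA_BC tBC = tlift sAB_C tAB_C sA_BC (\<lambda>u z. g z u)"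
    unfolding tassoc_def g_def ..
  then show "module_hom sAB_C sA_BC (tassoc sAB_C tAB_C sAB tAB sA_BC tA_BC tBC)"
    and "tassoc sAB_C tAB_C sAB tAB sA_BC tA_BC tBC (tAB_C (tAB x y) z) = tA_BC x (tBC y z)"
    by (simp_all add: tlift_hom[OF AB_C A_BC_mod bil] tlift_tensor[OF AB_C A_BC_mod bil] g_tensor)
qed

lemma tswap_hom: "module_hom sCC sCC (tswap sCC tCC)"
  and tswap_tensor: "tswap sCC tCC (tCC x y) = tCC y x"
  if "is_tensor sC sC sCC tCC"
  unfolding tswap_def
  using that is_tensor_module[OF that] module_bilinear_flip[OF is_tensor_bilinear[OF that]]
  by (rule tlift_hom tlift_tensor)+

section \<open>Dual bases over rings of global dimension zero\<close>

lemma module_mult_self: "module ((*) :: 'k::comm_ring_1 \<Rightarrow> 'k \<Rightarrow> 'k)"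
  by unfold_locales (auto simp: algebra_simps)

lemma gldim_zero_ideal_unit:
  fixes I :: "'k::comm_ring_1 set"
  assumes k: "gldim_zero TYPE('k)" and I: "module.subspace (*) I"
  shows "\<exists>a\<in>I. \<forall>x\<in>I. x * a = x"
proof -
  interpret R: module "(*) :: 'k \<Rightarrow> 'k \<Rightarrow> 'k" by (rule module_mult_self)
  obtain J a b where J: "R.subspace J" "I \<inter> J = {0}" and ab: "a \<in> I" "b \<in> J" "1 = a + b"
    using k I unfolding gldim_zero_def by meson
  have "x * a = x" if x: "x \<in> I" for x
  proof -
    have "b = 1 - a"
      using ab(3) by (simp add: eq_diff_eq add.commute)
    then have "x - x * a = x * b"
      by (simp add: right_diff_distrib)
    moreover have "x * b \<in> J"
      using R.subspace_scale[OF J(1) ab(2), of x] by simp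
    moreover have "x - x * a \<in> I"
      using R.subspace_diff[OF I x R.subspace_scale[OF I ab(1), of x]] by simp
    ultimately have "x - x * a \<in> I \<inter> J"
      by simp
    then show ?thesis using J(2) by simp
  qed
  then show ?thesis using ab(1) by blast
qed

context module
begin

definition linear_functional_on :: "'b set \<Rightarrow> ('b \<Rightarrow> 'a) \<Rightarrow> bool" where
  "linear_functional_on X \<psi> \<longleftrightarrow>
     (\<forall>x\<in>X. \<forall>y\<in>X. \<psi> (x + y) = \<psi> x + \<psi> y) \<and> (\<forall>c. \<forall>x\<in>X. \<psi> (c *s x) = c * \<psi> x)"

definition dual_basis_on :: "'b set \<Rightarrow> nat \<Rightarrow> (nat \<Rightarrow> 'b) \<Rightarrow> (nat \<Rightarrow> 'b \<Rightarrow> 'a) \<Rightarrow> bool" where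
  "dual_basis_on X n e \<phi> \<longleftrightarrow>
     (\<forall>i<n. linear_functional_on X (\<phi> i)) \<and> (\<forall>m\<in>X. m = (\<Sum>i<n. \<phi> i m *s e i))"

lemma linear_functional_on_span_insert:
  assumes \<psi>: "\<And>m r. m - r *s s \<in> span X \<Longrightarrow> \<psi> m = r * u"
  shows "linear_functional_on (span (insert s X)) \<psi>"
  unfolding linear_functional_on_def
proof (intro conjI ballI allI)
  fix x y c
  assume "x \<in> span (insert s X)" "y \<in> span (insert s X)"
  then obtain rx ry where rx: "x - rx *s s \<in> span X" and ry: "y - ry *s s \<in> span X"
    by (auto simp: span_breakdown_eq)
  have "(x + y) - (rx + ry) *s s \<in> span X"
    using span_add[OF rx ry] by (simp add: algebra_simps)
  then show "\<psi> (x + y) = \<psi> x + \<psi> y"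
    by (simp only: \<psi> \<psi>[OF rx] \<psi>[OF ry] distrib_right)
  have "c *s x - (c * rx) *s s \<in> span X"
    using span_scale[OF rx, of c] by (simp add: algebra_simps)
  then show "\<psi> (c *s x) = c * \<psi> x"
    by (simp only: \<psi> \<psi>[OF rx] mult.assoc)
qed

lemma span_insert_coordinate:
  assumes k: "gldim_zero TYPE('a)"
  obtains \<psi> where "linear_functional_on (span (insert s X)) \<psi>"
    and "\<And>m. m \<in> span (insert s X) \<Longrightarrow> m - \<psi> m *s s \<in> span X"
proof -
  interpret R: module "(*) :: 'a \<Rightarrow> 'a \<Rightarrow> 'a" by (rule module_mult_self)
  let ?I = "{r. r *s s \<in> span X}"
  have "R.subspace ?I"
    by (auto simp: R.subspace_def span_zero scale_left_distrib span_add span_scale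
        simp flip: scale_scale)
  then obtain a where a: "a \<in> ?I" and unit: "\<And>r. r \<in> ?I \<Longrightarrow> r * a = r"
    using gldim_zero_ideal_unit[OF k] by blast
  \<comment> \<open>The coordinate of m along s is determined only modulo ?I = Ra; the factor 1 - a
      kills this ambiguity.\<close>
  define \<psi> where "\<psi> m = (SOME r. m - r *s s \<in> span X) * (1 - a)" for m
  have \<psi>: "\<psi> m = r * (1 - a)" if r: "m - r *s s \<in> span X" for m r
  proof -
    define r' where "r' = (SOME r. m - r *s s \<in> span X)"
    have "m - r' *s s \<in> span X"
      unfolding r'_def using r by (rule someI)
    with r have "(m - r *s s) - (m - r' *s s) \<in> span X"
      by (rule span_diff)
    then have "(r' - r) *s s \<in> span X"
      by (simp add: scale_left_diff_distrib)
    then have "(r' - r) * a = r' - r"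
      using unit by blast
    then have "(r' - r) * (1 - a) = 0"
      by (simp add: algebra_simps)
    then show ?thesis
      unfolding \<psi>_def r'_def[symmetric] by (simp add: algebra_simps)
  qed
  have \<psi>_coordinate: "m - \<psi> m *s s \<in> span X" if r: "m - r *s s \<in> span X" for m r
  proof -
    have "m - \<psi> m *s s = (m - r *s s) + r *s (a *s s)"
      by (simp add: \<psi>[OF r] algebra_simps)
    also have "\<dots> \<in> span X"
      by (rule span_add[OF r span_scale]) (use a in simp)
    finally show ?thesis .
  qed
  show ?thesis
  proof
    show "linear_functional_on (span (insert s X)) \<psi>"
      using \<psi> by (rule linear_functional_on_span_insert)
    show "m - \<psi> m *s s \<in> span X" if "m \<in> span (insert s X)" for m
      using that \<psi>_coordinate by (auto simp: span_breakdown_eq)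
  qed
qed

lemma dual_basis_on_insert:
  assumes \<phi>: "dual_basis_on (span X) n e \<phi>" and \<psi>: "linear_functional_on (span (insert s X)) \<psi>"
    and \<psi>_coordinate: "\<And>m. m \<in> span (insert s X) \<Longrightarrow> m - \<psi> m *s s \<in> span X"
  shows "dual_basis_on (span (insert s X)) (Suc n) (e(n := s))
           (\<lambda>i m. if i < n then \<phi> i (m - \<psi> m *s s) else \<psi> m)"
proof -
  define P where "P m = m - \<psi> m *s s" for m
  have P_linear: "P (x + y) = P x + P y" "P (c *s x) = c *s P x"
    if "x \<in> span (insert s X)" "y \<in> span (insert s X)" for x y c
    using \<psi> that by (simp_all add: P_def linear_functional_on_def algebra_simps)
  have P_span: "P m \<in> span X" if "m \<in> span (insert s X)" for m
    using \<psi>_coordinate[OF that] by (simp add: P_def)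
  have "linear_functional_on (span (insert s X)) (\<lambda>m. \<phi> i (P m))" if "i < n" for i
    using \<phi> that P_span span_scale
    unfolding dual_basis_on_def linear_functional_on_def
    by (simp add: P_linear)
  moreover have "m = (\<Sum>i<n. \<phi> i (P m) *s e i) + \<psi> m *s s" if "m \<in> span (insert s X)" for m
    using \<phi> P_span[OF that] unfolding dual_basis_on_def P_def by simp
  moreover have "(\<Sum>i<Suc n. (if i < n then \<phi> i (P m) else \<psi> m) *s (e(n := s)) i) =
      (\<Sum>i<n. \<phi> i (P m) *s e i) + \<psi> m *s s" for m
    unfolding sum.lessThan_Suc by (auto intro: sum.cong)
  ultimately show ?thesis
    using \<psi> unfolding dual_basis_on_def P_def by (simp add: less_Suc_eq)
qed

lemma dual_basis_on_span:
  assumes k: "gldim_zero TYPE('a)" and "finite S"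
  shows "\<exists>n e \<phi>. dual_basis_on (span S) n e \<phi>"
  using \<open>finite S\<close>
proof induct
  case empty
  show ?case
    by (rule exI[of _ 0]) (simp add: dual_basis_on_def)
next
  case (insert s S)
  then obtain n e \<phi> where "dual_basis_on (span S) n e \<phi>"
    by blast
  moreover obtain \<psi> where "linear_functional_on (span (insert s S)) \<psi>"
    and "\<And>m. m \<in> span (insert s S) \<Longrightarrow> m - \<psi> m *s s \<in> span S"
    using span_insert_coordinate[OF k] by blast
  ultimately show ?case
    using dual_basis_on_insert by blast
qed

lemma finitely_generated_dual_basis:
  assumes "gldim_zero TYPE('a)" and "finitely_generated scale"
  shows "\<exists>n e \<phi>. dual_basis scale n e \<phi>"
proof -
  obtain S where "finite S" and "span S = UNIV"
    using assms(2) unfolding finitely_generated_def by blast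
  then obtain n e \<phi> where "dual_basis_on UNIV n e \<phi>"
    using dual_basis_on_span[OF assms(1)] by metis
  then have "dual_basis scale n e \<phi>"
    unfolding dual_basis_def dual_basis_on_def linear_functional_on_def module_hom_iff
    using module_axioms module_mult_self[where 'k='a] by simp
  then show ?thesis by blast
qed

end

lemma dual_basis_hom: "dual_basis sM n e \<phi> \<Longrightarrow> i < n \<Longrightarrow> module_hom sM (*) (\<phi> i)"
  and dual_basis_expansion: "dual_basis sM n e \<phi> \<Longrightarrow> m = (\<Sum>i<n. sM (\<phi> i m) (e i))"
  unfolding dual_basis_def by blast+

definition contract ::
  "('k::comm_ring_1 \<Rightarrow> 'mc::ab_group_add \<Rightarrow> 'mc) \<Rightarrow> ('m \<Rightarrow> 'c \<Rightarrow> 'mc) \<Rightarrow> ('k \<Rightarrow> 'c::ab_group_add \<Rightarrow> 'c)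
   \<Rightarrow> ('m \<Rightarrow> 'k) \<Rightarrow> 'mc \<Rightarrow> 'c" where
  "contract sMC tMC sC \<phi> = tlift sMC tMC sC (\<lambda>m c. sC (\<phi> m) c)"

context
  fixes sM :: "'k::comm_ring_1 \<Rightarrow> 'm::ab_group_add \<Rightarrow> 'm" and sC :: "'k \<Rightarrow> 'c::ab_group_add \<Rightarrow> 'c"
    and sMC :: "'k \<Rightarrow> 'mc::ab_group_add \<Rightarrow> 'mc" and tMC :: "'m \<Rightarrow> 'c \<Rightarrow> 'mc"
  assumes T: "is_tensor sM sC sMC tMC"
begin

lemma contract_hom: "module_hom sMC sC (contract sMC tMC sC \<phi>)"
  and contract_tensor: "contract sMC tMC sC \<phi> (tMC m c) = sC (\<phi> m) c"
  if "module_hom sM (*) \<phi>"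
  unfolding contract_def
  using T is_tensor_module_right[OF T] module_bilinear_scale_functional[OF that is_tensor_module_right[OF T]]
  by (rule tlift_hom tlift_tensor)+

lemma tensor_expansion_dual_basis:
  assumes db: "dual_basis sM n e \<phi>"
  shows "x = (\<Sum>k<n. tMC (e k) (contract sMC tMC sC (\<phi> k) x))"
proof -
  note bil = is_tensor_bilinear[OF T] and MC = is_tensor_module[OF T]
  have "module_hom sMC sMC (\<lambda>x. \<Sum>k<n. tMC (e k) (contract sMC tMC sC (\<phi> k) x))"
    using module_hom_compose[OF contract_hom[OF dual_basis_hom[OF db]] module_bilinear_hom_right[OF bil]]
    by (intro module_pair.module_hom_sum[OF module_pair.intro[OF MC MC]]) (auto simp: o_def MC)
  moreover have "tMC m c = (\<Sum>k<n. tMC (e k) (contract sMC tMC sC (\<phi> k) (tMC m c)))" for m c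
  proof -
    have "(\<Sum>k<n. tMC (e k) (contract sMC tMC sC (\<phi> k) (tMC m c))) = (\<Sum>k<n. tMC (e k) (sC (\<phi> k m) c))"
      by (simp add: contract_tensor[OF dual_basis_hom[OF db]])
    also have "\<dots> = tMC (\<Sum>k<n. sM (\<phi> k m) (e k)) c"
      by (simp add: module_hom.sum[OF module_bilinear_hom_left[OF bil]]
          module_hom.scale[OF module_bilinear_hom_left[OF bil]]
          module_hom.scale[OF module_bilinear_hom_right[OF bil]])
    also have "\<dots> = tMC m c"
      by (simp flip: dual_basis_expansion[OF db])
    finally show ?thesis ..
  qed
  ultimately have "(\<lambda>x. x) = (\<lambda>x. \<Sum>k<n. tMC (e k) (contract sMC tMC sC (\<phi> k) x))"
    by (rule tensor_hom_eqI[OF T module.module_hom_ident[OF MC]])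
  then show ?thesis by metis
qed

lemma contract_eq_sum_dual_basis:
  assumes db: "dual_basis sM n e \<phi>" and \<psi>: "module_hom sM (*) \<psi>"
  shows "contract sMC tMC sC \<psi> = (\<lambda>x. \<Sum>i<n. sC (\<psi> (e i)) (contract sMC tMC sC (\<phi> i) x))"
proof (rule tensor_hom_eqI[OF T contract_hom[OF \<psi>]])
  note C = is_tensor_module_right[OF T] and MC = is_tensor_module[OF T]
  show "module_hom sMC sC (\<lambda>x. \<Sum>i<n. sC (\<psi> (e i)) (contract sMC tMC sC (\<phi> i) x))"
    using contract_hom[OF dual_basis_hom[OF db]]
    by (intro module_pair.module_hom_sum[OF module_pair.intro[OF MC C]]
        module_pair.module_hom_scale[OF module_pair.intro[OF MC C]]) (auto simp: MC C)
  fix m c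
  have "\<psi> m = (\<Sum>i<n. \<phi> i m * \<psi> (e i))"
    by (subst dual_basis_expansion[OF db, of m]) (simp add: module_hom.sum[OF \<psi>] module_hom.scale[OF \<psi>])
  then show "contract sMC tMC sC \<psi> (tMC m c) = (\<Sum>i<n. sC (\<psi> (e i)) (contract sMC tMC sC (\<phi> i) (tMC m c)))"
    by (simp add: contract_tensor \<psi> dual_basis_hom[OF db] module.scale_sum_left[OF C] mult.commute
        module.scale_scale[OF C])
qed

lemma dual_basis_trace_independent:
  assumes db: "dual_basis sM n e \<phi>" and db': "dual_basis sM n' e' \<psi>" and g: "module_hom sM sMC g"
  shows "(\<Sum>j<n'. contract sMC tMC sC (\<psi> j) (g (e' j))) = (\<Sum>i<n. contract sMC tMC sC (\<phi> i) (g (e i)))"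
proof -
  have "(\<Sum>j<n'. contract sMC tMC sC (\<psi> j) (g (e' j)))
      = (\<Sum>j<n'. \<Sum>i<n. sC (\<psi> j (e i)) (contract sMC tMC sC (\<phi> i) (g (e' j))))"
    by (simp add: contract_eq_sum_dual_basis[OF db dual_basis_hom[OF db']])
  also have "\<dots> = (\<Sum>i<n. contract sMC tMC sC (\<phi> i) (g (\<Sum>j<n'. sM (\<psi> j (e i)) (e' j))))"
    by (subst sum.swap)
       (simp add: module_hom.sum[OF g] module_hom.scale[OF g] module_hom.sum[OF contract_hom]
         module_hom.scale[OF contract_hom] dual_basis_hom[OF db])
  also have "\<dots> = (\<Sum>i<n. contract sMC tMC sC (\<phi> i) (g (e i)))"
    by (simp flip: dual_basis_expansion[OF db'])
  finally show ?thesis .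
qed

lemma twisted_trace_eq:
  assumes db: "dual_basis sM n e \<phi>" and g: "module_hom sM sMC g"
  shows "twisted_trace sM sMC tMC sC g = (\<Sum>i<n. contract sMC tMC sC (\<phi> i) (g (e i)))"
proof -
  let ?P = "\<lambda>x. \<exists>n e \<phi>. dual_basis sM n e \<phi> \<and> x = (\<Sum>i<n. contract sMC tMC sC (\<phi> i) (g (e i)))"
  have "?P (\<Sum>i<n. contract sMC tMC sC (\<phi> i) (g (e i)))"
    using db by blast
  then have "?P (twisted_trace sM sMC tMC sC g)"
    unfolding twisted_trace_def contract_def[symmetric] by (rule someI)
  then show ?thesis
    using dual_basis_trace_independent[OF db _ g] by auto
qed

end

section \<open>The comodule trace is a cotrace\<close>

locale coaction_dual_basis =
  fixes sM :: "'k::comm_ring_1 \<Rightarrow> 'm::ab_group_add \<Rightarrow> 'm" and sC :: "'k \<Rightarrow> 'c::ab_group_add \<Rightarrow> 'c"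
    and sMC :: "'k \<Rightarrow> 'mc::ab_group_add \<Rightarrow> 'mc" and tMC :: "'m \<Rightarrow> 'c \<Rightarrow> 'mc"
    and \<rho> :: "'m \<Rightarrow> 'mc" and n :: nat and e :: "nat \<Rightarrow> 'm" and \<phi> :: "nat \<Rightarrow> 'm \<Rightarrow> 'k"
  assumes tensor_MC: "is_tensor sM sC sMC tMC" and coaction_hom: "module_hom sM sMC \<rho>"
    and dual_basis: "dual_basis sM n e \<phi>"
begin

lemma module_M: "module sM" and module_C: "module sC" and module_MC: "module sMC"
  using tensor_MC by (rule is_tensor_module_left is_tensor_module_right is_tensor_module)+

lemma contract_dual_basis_hom: "i < n \<Longrightarrow> module_hom sMC sC (contract sMC tMC sC (\<phi> i))"
  by (rule contract_hom[OF tensor_MC dual_basis_hom[OF dual_basis]])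

lemma trC_eq_sum:
  "module_hom sM sM f \<Longrightarrow> trC sM sMC tMC sC \<rho> f = (\<Sum>i<n. contract sMC tMC sC (\<phi> i) (\<rho> (f (e i))))"
  unfolding trC_def
  using module_hom_compose[OF _ coaction_hom, of sM f]
  by (simp add: o_def twisted_trace_eq[OF tensor_MC dual_basis])

lemma trC_add:
  assumes "module_hom sM sM f" and "module_hom sM sM g"
  shows "trC sM sMC tMC sC \<rho> (\<lambda>m. f m + g m) = trC sM sMC tMC sC \<rho> f + trC sM sMC tMC sC \<rho> g"
  using assms module_pair.module_hom_add[OF module_pair.intro[OF module_M module_M] assms]
  by (simp add: trC_eq_sum sum.distrib module_hom.add[OF coaction_hom]
      module_hom.add[OF contract_dual_basis_hom])

lemma trC_scale:
  assumes "module_hom sM sM f"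
  shows "trC sM sMC tMC sC \<rho> (\<lambda>m. sM a (f m)) = sC a (trC sM sMC tMC sC \<rho> f)"
  using assms module_pair.module_hom_scale[OF module_pair.intro[OF module_M module_M] assms]
  by (simp add: trC_eq_sum module.scale_sum_right[OF module_C] module_hom.scale[OF coaction_hom]
      module_hom.scale[OF contract_dual_basis_hom])

end

locale comodule_dual_basis = coaction_dual_basis sM sC sMC tMC \<rho> n e \<phi>
  for sM :: "'k::comm_ring_1 \<Rightarrow> 'm::ab_group_add \<Rightarrow> 'm" and sC :: "'k \<Rightarrow> 'c::ab_group_add \<Rightarrow> 'c"
    and sMC :: "'k \<Rightarrow> 'mc::ab_group_add \<Rightarrow> 'mc" and tMC :: "'m \<Rightarrow> 'c \<Rightarrow> 'mc"
    and \<rho> :: "'m \<Rightarrow> 'mc" and n :: nat and e :: "nat \<Rightarrow> 'm" and \<phi> :: "nat \<Rightarrow> 'm \<Rightarrow> 'k" +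
  fixes sCC :: "'k \<Rightarrow> 'cc::ab_group_add \<Rightarrow> 'cc" and tCC :: "'c \<Rightarrow> 'c \<Rightarrow> 'cc" and \<Delta> :: "'c \<Rightarrow> 'cc"
    and sMC_C :: "'k \<Rightarrow> 'mc_c::ab_group_add \<Rightarrow> 'mc_c" and tMC_C :: "'mc \<Rightarrow> 'c \<Rightarrow> 'mc_c"
    and sM_CC :: "'k \<Rightarrow> 'm_cc::ab_group_add \<Rightarrow> 'm_cc" and tM_CC :: "'m \<Rightarrow> 'cc \<Rightarrow> 'm_cc"
  assumes tensor_CC: "is_tensor sC sC sCC tCC" and comul_hom: "module_hom sC sCC \<Delta>"
    and tensor_MC_C: "is_tensor sMC sC sMC_C tMC_C" and tensor_M_CC: "is_tensor sM sCC sM_CC tM_CC"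
    and coassoc: "\<And>m. tassoc sMC_C tMC_C sMC tMC sM_CC tM_CC tCC
            (tlift sMC tMC sMC_C (\<lambda>x y. tMC_C (\<rho> x) y) (\<rho> m))
          = tlift sMC tMC sM_CC (\<lambda>x y. tM_CC x (\<Delta> y)) (\<rho> m)"
begin

definition coeff :: "nat \<Rightarrow> nat \<Rightarrow> 'c" where
  "coeff i j = contract sMC tMC sC (\<phi> i) (\<rho> (e j))"

lemma coaction_expansion: "\<rho> (e j) = (\<Sum>k<n. tMC (e k) (coeff k j))"
  unfolding coeff_def by (rule tensor_expansion_dual_basis[OF tensor_MC dual_basis])

lemma sum_dual_basis_coeff: "l < n \<Longrightarrow> (\<Sum>i<n. sC (\<phi> l (e i)) (coeff i j)) = coeff l j"
  by (subst (2) coeff_def, subst coaction_expansion)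
     (simp add: module_hom.sum[OF contract_dual_basis_hom]
       contract_tensor[OF tensor_MC dual_basis_hom[OF dual_basis]])

lemma tCC_sum_left: "tCC (\<Sum>i\<in>A. a i) b = (\<Sum>i\<in>A. tCC (a i) b)"
  and tCC_sum_right: "tCC b (\<Sum>i\<in>A. a i) = (\<Sum>i\<in>A. tCC b (a i))"
  and tCC_scale_left: "tCC (sC c x) y = sCC c (tCC x y)"
  and tCC_scale_right: "tCC x (sC c y) = sCC c (tCC x y)"
  using is_tensor_bilinear[OF tensor_CC]
  by (simp_all add: module_hom.sum[OF module_bilinear_hom_left] module_hom.sum[OF module_bilinear_hom_right]
      module_hom.scale[OF module_bilinear_hom_left] module_hom.scale[OF module_bilinear_hom_right])

lemma coassoc_coeff:
  "(\<Sum>j<n. \<Sum>i<n. tM_CC (e i) (tCC (coeff i j) (coeff j k))) = (\<Sum>j<n. tM_CC (e j) (\<Delta> (coeff j k)))"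
proof -
  note MC_C = is_tensor_bilinear[OF tensor_MC_C] and M_CC = is_tensor_bilinear[OF tensor_M_CC]
  define \<rho>_id where "\<rho>_id = tlift sMC tMC sMC_C (\<lambda>x y. tMC_C (\<rho> x) y)"
  define id_\<Delta> where "id_\<Delta> = tlift sMC tMC sM_CC (\<lambda>x y. tM_CC x (\<Delta> y))"
  define assoc where "assoc = tassoc sMC_C tMC_C sMC tMC sM_CC tM_CC tCC"
  have \<rho>_id: "module_hom sMC sMC_C \<rho>_id" "\<rho>_id (tMC x y) = tMC_C (\<rho> x) y" for x y
    unfolding \<rho>_id_def using module_bilinear_compose_left[OF MC_C coaction_hom]
    by (rule tlift_hom[OF tensor_MC is_tensor_module[OF tensor_MC_C]]
        tlift_tensor[OF tensor_MC is_tensor_module[OF tensor_MC_C]])+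
  have id_\<Delta>: "module_hom sMC sM_CC id_\<Delta>" "id_\<Delta> (tMC x y) = tM_CC x (\<Delta> y)" for x y
    unfolding id_\<Delta>_def using module_bilinear_compose_right[OF M_CC comul_hom]
    by (rule tlift_hom[OF tensor_MC is_tensor_module[OF tensor_M_CC]]
        tlift_tensor[OF tensor_MC is_tensor_module[OF tensor_M_CC]])+
  have assoc: "module_hom sMC_C sM_CC assoc" "assoc (tMC_C (tMC x y) z) = tM_CC x (tCC y z)" for x y z
    unfolding assoc_def using tensor_MC tensor_MC_C tensor_M_CC is_tensor_bilinear[OF tensor_CC]
    by (rule tassoc_hom tassoc_tensor)+
  have "assoc (\<rho>_id (\<rho> (e k))) = (\<Sum>j<n. \<Sum>i<n. tM_CC (e i) (tCC (coeff i j) (coeff j k)))"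
    by (simp add: coaction_expansion module_hom.sum[OF \<rho>_id(1)] \<rho>_id(2)
        module_hom.sum[OF module_bilinear_hom_left[OF MC_C]] module_hom.sum[OF assoc(1)] assoc(2))
  moreover have "id_\<Delta> (\<rho> (e k)) = (\<Sum>j<n. tM_CC (e j) (\<Delta> (coeff j k)))"
    by (simp add: coaction_expansion[of k] module_hom.sum[OF id_\<Delta>(1)] id_\<Delta>(2))
  ultimately show ?thesis
    using coassoc[of "e k"] by (simp add: \<rho>_id_def id_\<Delta>_def assoc_def)
qed

lemma comul_coeff:
  assumes l: "l < n"
  shows "\<Delta> (coeff l k) = (\<Sum>j<n. tCC (coeff l j) (coeff j k))"
proof -
  define \<phi>_id where "\<phi>_id = contract sM_CC tM_CC sCC (\<phi> l)"
  have \<phi>_id: "module_hom sM_CC sCC \<phi>_id" "\<phi>_id (tM_CC m x) = sCC (\<phi> l m) x" for m x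
    unfolding \<phi>_id_def using dual_basis_hom[OF dual_basis l]
    by (rule contract_hom[OF tensor_M_CC] contract_tensor[OF tensor_M_CC])+
  have "\<Delta> (coeff l k) = \<phi>_id (\<Sum>j<n. tM_CC (e j) (\<Delta> (coeff j k)))"
    by (simp add: sum_dual_basis_coeff[OF l, symmetric] module_hom.sum[OF \<phi>_id(1)] \<phi>_id(2)
        module_hom.sum[OF comul_hom] module_hom.scale[OF comul_hom])
  also have "\<dots> = \<phi>_id (\<Sum>j<n. \<Sum>i<n. tM_CC (e i) (tCC (coeff i j) (coeff j k)))"
    by (simp add: coassoc_coeff)
  also have "\<dots> = (\<Sum>j<n. tCC (\<Sum>i<n. sC (\<phi> l (e i)) (coeff i j)) (coeff j k))"
    by (simp add: module_hom.sum[OF \<phi>_id(1)] \<phi>_id(2) tCC_sum_left tCC_scale_left)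
  also have "\<dots> = (\<Sum>j<n. tCC (coeff l j) (coeff j k))"
    by (simp add: sum_dual_basis_coeff[OF l])
  finally show ?thesis .
qed

lemma contract_coaction_image:
  assumes "i < n" and "module_hom sM sM f"
  shows "contract sMC tMC sC (\<phi> i) (\<rho> (f (e j))) = (\<Sum>k<n. sC (\<phi> k (f (e j))) (coeff i k))"
proof -
  have "\<rho> (f (e j)) = (\<Sum>k<n. sMC (\<phi> k (f (e j))) (\<rho> (e k)))"
    by (subst dual_basis_expansion[OF dual_basis])
       (simp add: module_hom.sum[OF coaction_hom] module_hom.scale[OF coaction_hom])
  then show ?thesis
    using assms(1) by (simp add: coeff_def module_hom.sum[OF contract_dual_basis_hom]
        module_hom.scale[OF contract_dual_basis_hom])
qed

lemma colinear_coeff_commute: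
  assumes f: "colinear sM sMC tMC \<rho> f" and "i < n"
  shows "(\<Sum>k<n. sC (\<phi> i (f (e k))) (coeff k j)) = (\<Sum>k<n. sC (\<phi> k (f (e j))) (coeff i k))"
proof -
  define f_id where "f_id = tlift sMC tMC sMC (\<lambda>x c. tMC (f x) c)"
  have f_hom: "module_hom sM sM f" and \<rho>_f: "\<rho> (f m) = f_id (\<rho> m)" for m
    using f unfolding colinear_def f_id_def by blast+
  have f_id: "module_hom sMC sMC f_id" "f_id (tMC x c) = tMC (f x) c" for x c
    unfolding f_id_def using module_bilinear_compose_left[OF is_tensor_bilinear[OF tensor_MC] f_hom]
    by (rule tlift_hom[OF tensor_MC module_MC] tlift_tensor[OF tensor_MC module_MC])+
  have "contract sMC tMC sC (\<phi> i) (\<rho> (f (e j))) = (\<Sum>k<n. sC (\<phi> i (f (e k))) (coeff k j))"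
    using \<open>i < n\<close>
    by (simp add: \<rho>_f coaction_expansion module_hom.sum[OF f_id(1)] f_id(2)
        module_hom.sum[OF contract_dual_basis_hom]
        contract_tensor[OF tensor_MC dual_basis_hom[OF dual_basis]])
  then show ?thesis
    using contract_coaction_image[OF \<open>i < n\<close> f_hom] by simp
qed

lemma trC_coeff:
  "module_hom sM sM f \<Longrightarrow> trC sM sMC tMC sC \<rho> f = (\<Sum>i<n. \<Sum>k<n. sC (\<phi> k (f (e i))) (coeff i k))"
  by (simp add: trC_eq_sum contract_coaction_image)

lemma comul_trC_symmetric:
  assumes f: "colinear sM sMC tMC \<rho> f"
  shows "\<Delta> (trC sM sMC tMC sC \<rho> f) = tswap sCC tCC (\<Delta> (trC sM sMC tMC sC \<rho> f))"
proof -
  have f_hom: "module_hom sM sM f"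
    using f unfolding colinear_def by blast
  define F where "F k i = \<phi> k (f (e i))" for k i
  define G where "G k j = (\<Sum>i<n. sC (F k i) (coeff i j))" for k j
  define X where "X = (\<Sum>k<n. \<Sum>j<n. tCC (G k j) (coeff j k))"
  have "\<Delta> (trC sM sMC tMC sC \<rho> f) = (\<Sum>i<n. \<Sum>k<n. sCC (F k i) (\<Delta> (coeff i k)))"
    by (simp add: trC_coeff[OF f_hom] F_def module_hom.sum[OF comul_hom] module_hom.scale[OF comul_hom])
  also have "\<dots> = (\<Sum>i<n. \<Sum>k<n. \<Sum>j<n. tCC (sC (F k i) (coeff i j)) (coeff j k))"
    by (intro sum.cong refl)
       (simp add: comul_coeff module.scale_sum_right[OF is_tensor_module[OF tensor_CC]] tCC_scale_left)
  also have "\<dots> = (\<Sum>k<n. \<Sum>i<n. \<Sum>j<n. tCC (sC (F k i) (coeff i j)) (coeff j k))"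
    by (rule sum.swap)
  also have "\<dots> = X"
    unfolding X_def G_def tCC_sum_left by (intro sum.cong refl sum.swap)
  finally have comul_trC: "\<Delta> (trC sM sMC tMC sC \<rho> f) = X" .
  have "X = (\<Sum>k<n. \<Sum>j<n. \<Sum>i<n. tCC (coeff k i) (sC (F i j) (coeff j k)))"
    unfolding X_def G_def F_def
    by (intro sum.cong refl)
       (simp add: colinear_coeff_commute[OF f] tCC_sum_left tCC_scale_left tCC_scale_right)
  also have "\<dots> = (\<Sum>k<n. \<Sum>i<n. tCC (coeff k i) (G i k))"
    unfolding G_def tCC_sum_right by (intro sum.cong refl sum.swap)
  also have "\<dots> = tswap sCC tCC X"
    unfolding X_def
    by (subst sum.swap) (simp add: module_hom.sum[OF tswap_hom[OF tensor_CC]] tswap_tensor[OF tensor_CC])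
  finally show ?thesis
    unfolding comul_trC .
qed

end

theorem proposition2p20:
  fixes sC :: "'k::comm_ring_1 \<Rightarrow> 'c::ab_group_add \<Rightarrow> 'c"
    and sCC :: "'k \<Rightarrow> 'cc::ab_group_add \<Rightarrow> 'cc" and tCC :: "'c \<Rightarrow> 'c \<Rightarrow> 'cc"
    and sCC_C :: "'k \<Rightarrow> 'cc_c::ab_group_add \<Rightarrow> 'cc_c" and tCC_C :: "'cc \<Rightarrow> 'c \<Rightarrow> 'cc_c"
    and sC_CC :: "'k \<Rightarrow> 'c_cc::ab_group_add \<Rightarrow> 'c_cc" and tC_CC :: "'c \<Rightarrow> 'cc \<Rightarrow> 'c_cc"
    and \<Delta> :: "'c \<Rightarrow> 'cc" and \<epsilon> :: "'c \<Rightarrow> 'k"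
    and sM :: "'k \<Rightarrow> 'm::ab_group_add \<Rightarrow> 'm"
    and sMC :: "'k \<Rightarrow> 'mc::ab_group_add \<Rightarrow> 'mc" and tMC :: "'m \<Rightarrow> 'c \<Rightarrow> 'mc"
    and sMC_C :: "'k \<Rightarrow> 'mc_c::ab_group_add \<Rightarrow> 'mc_c" and tMC_C :: "'mc \<Rightarrow> 'c \<Rightarrow> 'mc_c"
    and sM_CC :: "'k \<Rightarrow> 'm_cc::ab_group_add \<Rightarrow> 'm_cc" and tM_CC :: "'m \<Rightarrow> 'cc \<Rightarrow> 'm_cc"
    and \<rho> :: "'m \<Rightarrow> 'mc"
  assumes k: "gldim_zero TYPE('k)"
    and C: "coalgebra sC sCC tCC sCC_C tCC_C sC_CC tC_CC \<Delta> \<epsilon>"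
    and M: "right_comodule sC sCC tCC \<Delta> \<epsilon> sM sMC tMC sMC_C tMC_C sM_CC tM_CC \<rho>"
    and fg: "finitely_generated sM"
  shows "(\<forall>f g. colinear sM sMC tMC \<rho> f \<and> colinear sM sMC tMC \<rho> g \<longrightarrow>
            trC sM sMC tMC sC \<rho> (\<lambda>m. f m + g m)
              = trC sM sMC tMC sC \<rho> f + trC sM sMC tMC sC \<rho> g)
       \<and> (\<forall>a f. colinear sM sMC tMC \<rho> f \<longrightarrow>
            trC sM sMC tMC sC \<rho> (\<lambda>m. sM a (f m)) = sC a (trC sM sMC tMC sC \<rho> f))
       \<and> (\<forall>f. colinear sM sMC tMC \<rho> f \<longrightarrow>
            \<Delta> (trC sM sMC tMC sC \<rho> f) = tswap sCC tCC (\<Delta> (trC sM sMC tMC sC \<rho> f))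
            \<and> trC sM sMC tMC sC \<rho> f \<in> coHH0 sCC tCC \<Delta>)"
proof -
  have M_tensor: "is_tensor sM sC sMC tMC"
    using M unfolding right_comodule_def by blast
  obtain n e \<phi> where "dual_basis sM n e \<phi>"
    using module.finitely_generated_dual_basis[OF is_tensor_module_left[OF M_tensor] k fg] by blast
  then interpret comodule_dual_basis sM sC sMC tMC \<rho> n e \<phi> sCC tCC \<Delta> sMC_C tMC_C sM_CC tM_CC
    using C M unfolding coalgebra_def right_comodule_def
    by (intro comodule_dual_basis.intro coaction_dual_basis.intro comodule_dual_basis_axioms.intro) blast+
  show ?thesis
    unfolding coHH0_def colinear_def
    using trC_add trC_scale comul_trC_symmetric[unfolded colinear_def] by simp
qed

end
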